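(* Assume there is $\alpha_{\min}\in(0,1)$ such that $D_P^{\alpha_{\min}}\in\mathcal{T}(\mathcal{H})$, $D(x)^{\alpha_{\min}}\in\mathcal{T}(\mathcal{H})$ for $P$-almost all $x$, and the Bochner integral $\mathbb{E}\big(D(X)^{\alpha_{\min}}\big)\in\mathcal{T}(\mathcal{H})$ exists. Then $\alpha\mapsto H_\alpha(U)$ and $\alpha\mapsto H_\alpha(Y|X)$ are continuously differentiable on $(\alpha_{\min},1)\cup(1,\infty)$, and $$\lim_{\alpha\to1}H_\alpha(U) = H_U,\qquad \lim_{\alpha\to1}H_\alpha(Y|X)=H_P.$$
   Context: $\mathcal{H}$ is a separable complex Hilbert space, $\mathcal{T}(\mathcal{H})$ the trace-class operators, $\mathcal{S}(\mathcal{H})$ the density operators, $(\mathcal{X},\Sigma)$ a measurable space, $D:\mathcal{X}\to\mathcal{S}(\mathcal{H})$ measurable (trace-norm Borel $\sigma$-algebra), $P$ a probability distribution on $\mathcal{X}$, $X\sim P$, $D_P := \mathbb{E}D(X)$ (Bochner integral). For every $x$ fix a spectral decomposition $D(x)=\sum_{y\in\mathbb{N}}P(y|x)|e_{y|x}\rangle\langle e_{y|x}|$ with $\{e_{y|x}\}_y$ an orthonormal basis, and $D_P=\sum_{y\in\mathbb{N}}U(y)|e_y\rangle\langle e_y|$ with $\{e_y\}$ an orthonormal basis. $H_P := -\mathbb{E}\sum_y P(y|X)\log P(y|X)$, $H_U := -\sum_y U(y)\log U(y)$. For $\alpha\in[\alpha_{\min},1)\cup(1,\infty)$: $H_\alpha(Y|X)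 := \frac{1}{1-\alpha}\log\mathbb{E}\sum_{y}P(y|X)^\alpha = \frac{1}{1-\alpha}\log\mathbb{E}\,\mathrm{tr}(D(X)^\alpha)$ and $H_\alpha(U):=\frac{1}{1-\alpha}\log\sum_y U(y)^\alpha = \frac1{1-\alpha}\log\mathrm{tr}(D_P^\alpha)$. *)

theory Defs
  imports "HOL-Probability.Probability"
begin

text \<open>Spectral-level rendering. The eigenvalues of D(x) are P x y (y :: nat),
 the eigenvalues of D_P are U y. Logarithm: natural log (ln).\<close>

definition Renyi_U :: "(nat \<Rightarrow> real) \<Rightarrow> real \<Rightarrow> real" where
  "Renyi_U U \<alpha> = 1 / (1 - \<alpha>) * ln (\<Sum>y. U y powr \<alpha>)"

definition Renyi_cond :: "'a measure \<Rightarrow> ('a \<Rightarrow> nat \<Rightarrow> real) \<Rightarrow> real \<Rightarrow> real" where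
  "Renyi_cond M P \<alpha> = 1 / (1 - \<alpha>) * ln (\<integral>x. (\<Sum>y. P x y powr \<alpha>) \<partial>M)"

definition Shannon_U :: "(nat \<Rightarrow> real) \<Rightarrow> real" where
  "Shannon_U U = - (\<Sum>y. U y * ln (U y))"

definition Shannon_cond :: "'a measure \<Rightarrow> ('a \<Rightarrow> nat \<Rightarrow> real) \<Rightarrow> real" where
  "Shannon_cond M P = - (\<integral>x. (\<Sum>y. P x y * ln (P x y)) \<partial>M)"

end

theory Submission
  imports Defs
begin

text \<open>Both Renyi entropies have the form ln G(t) / (1 - t), where G(t) is the expectation of
  \<Sum>y P(y|X)^t and G(1) = 1; hence their limit at t = 1 is -G'(1), the Shannon entropy.
  The t-derivatives p^t (ln p)^k of the terms are bounded, uniformly for t \<ge> a > \<alpha>min, by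
  k! / (a - \<alpha>min)^k p^\<alpha>min, which is summable and integrable by hypothesis. By dominated
  convergence G can therefore be differentiated twice under the sum and the expectation, so G' is
  continuous. The unconditional entropy is the conditional one for the constant kernel
  P(y|x) = U(y).\<close>

lemma power_le_fact_mult_exp:
  fixes z :: real
  assumes "0 \<le> z"
  shows "z ^ k \<le> fact k * exp z"
proof -
  have exp_sums: "(\<lambda>n. z ^ n / fact n) sums exp z"
    using exp_converges[of z] by (simp add: divide_inverse mult.commute)
  have "z ^ k / fact k \<le> exp z"
    using sum_le_suminf[OF sums_summable[OF exp_sums], of "{k}"] assms
    by (simp add: sums_unique[OF exp_sums])
  then show ?thesis by (simp add: divide_le_eq mult.commute)
qed

text \<open>Since \<open>0 powr t = 0\<close>, \<open>ln_moment k t 0 = 0\<close>, matching the convention \<open>0 ln 0 = 0\<close>.\<close>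

definition ln_moment :: "nat \<Rightarrow> real \<Rightarrow> real \<Rightarrow> real" where
  "ln_moment k t p = p powr t * ln p ^ k"

lemma has_real_derivative_ln_moment:
  assumes "0 \<le> p"
  shows "((\<lambda>s. ln_moment k s p) has_real_derivative ln_moment (Suc k) t p) (at t)"
proof (cases "p = 0")
  case False
  with assms have "p > 0" by simp
  have "((\<lambda>s. exp (s * ln p) * ln p ^ k) has_real_derivative exp (t * ln p) * ln p * ln p ^ k) (at t)"
    by (auto intro!: derivative_eq_intros)
  with \<open>p > 0\<close> show ?thesis by (simp add: ln_moment_def powr_def mult_ac)
qed (simp add: ln_moment_def)

lemma abs_ln_moment_le:
  assumes p: "0 \<le> p" "p \<le> 1" and "b < a" "a \<le> t"
  shows "\<bar>ln_moment k t p\<bar> \<le> fact k / (a - b) ^ k * p powr b"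
proof (cases "p = 0")
  case False
  with p have "p > 0" by simp
  define v where "v = - ln p"
  define c where "c = a - b"
  have "v \<ge> 0" "c > 0" using p \<open>p > 0\<close> \<open>b < a\<close> by (auto simp: v_def c_def)
  have "\<bar>ln p\<bar> = v" using p \<open>p > 0\<close> by (simp add: v_def)
  then have "\<bar>ln_moment k t p\<bar> = p powr t * v ^ k"
    by (simp add: ln_moment_def abs_mult power_abs)
  also have "\<dots> \<le> p powr a * v ^ k"
    using p \<open>a \<le> t\<close> \<open>v \<ge> 0\<close> by (intro mult_right_mono powr_mono') auto
  also have "p powr a = p powr b * exp (- (c * v))"
    using \<open>p > 0\<close> by (simp add: c_def v_def powr_def exp_add[symmetric] algebra_simps)
  also have "p powr b * exp (- (c * v)) * v ^ k \<le> p powr b * (fact k / c ^ k)"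
    unfolding mult.assoc
  proof (rule mult_left_mono)
    have "v ^ k * c ^ k \<le> fact k * exp (c * v)"
      using power_le_fact_mult_exp[of "c * v" k] \<open>v \<ge> 0\<close> \<open>c > 0\<close>
      by (simp add: power_mult_distrib mult_ac)
    then show "exp (- (c * v)) * v ^ k \<le> fact k / c ^ k"
      using \<open>c > 0\<close> by (simp add: exp_minus field_simps)
  qed simp
  finally show ?thesis by (simp add: c_def mult_ac)
qed (simp add: ln_moment_def)

lemma has_real_derivative_integral:
  fixes f f' :: "real \<Rightarrow> 'b \<Rightarrow> real"
  assumes "a < t"
    and integrable: "\<And>s. a < s \<Longrightarrow> integrable N (f s)"
    and "f' t \<in> borel_measurable N"
    and deriv: "AE x in N. \<forall>s>a. ((\<lambda>s. f s x) has_real_derivative f' s x) (at s)"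
    and bound: "AE x in N. \<forall>s>a. \<bar>f' s x\<bar> \<le> g x"
    and "integrable N g"
  shows "((\<lambda>s. \<integral>x. f s x \<partial>N) has_real_derivative (\<integral>x. f' t x \<partial>N)) (at t)"
proof -
  define q where "q s x = (f s x - f t x) / (s - t)" for s x
  have "((\<lambda>s. \<integral>x. q s x \<partial>N) \<longlongrightarrow> (\<integral>x. f' t x \<partial>N)) (at t within {a<..})"
    unfolding tendsto_at_iff_sequentially comp_def
  proof (intro allI impI)
    fix X :: "nat \<Rightarrow> real"
    assume X: "\<forall>i. X i \<in> {a<..} - {t}" and "X \<longlonglongrightarrow> t"
    show "(\<lambda>i. \<integral>x. q (X i) x \<partial>N) \<longlonglongrightarrow> (\<integral>x. f' t x \<partial>N)"
    proof (rule integral_dominated_convergence[where w=g])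
      show "q (X i) \<in> borel_measurable N" for i
        using X \<open>a < t\<close> unfolding q_def
        by (intro borel_measurable_divide borel_measurable_diff borel_measurable_integrable
            integrable borel_measurable_const) auto
      show "AE x in N. (\<lambda>i. q (X i) x) \<longlonglongrightarrow> f' t x"
        using deriv
      proof eventually_elim
        case (elim x)
        then have "((\<lambda>s. q s x) \<longlongrightarrow> f' t x) (at t)"
          using \<open>a < t\<close> by (auto simp: q_def has_field_derivative_iff)
        then show ?case
          using X \<open>X \<longlonglongrightarrow> t\<close> by (auto simp: tendsto_at_iff_sequentially comp_def)
      qed
      show "AE x in N. norm (q (X i) x) \<le> g x" for i
        using deriv bound
      proof eventually_elim
        case (elim x)
        have "\<bar>f (X i) x - f t x\<bar> \<le> g x * \<bar>X i - t\<bar>"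
          using field_differentiable_bound[of "{a<..}" "\<lambda>s. f s x" "\<lambda>s. f' s x" "g x" "X i" t]
            elim X \<open>a < t\<close> by (auto intro: has_field_derivative_at_within)
        with X show ?case by (auto simp: q_def abs_divide divide_le_eq)
      qed
    qed fact+
  qed
  moreover have "\<forall>\<^sub>F s in at t within {a<..}.
      (\<integral>x. q s x \<partial>N) = ((\<integral>x. f s x \<partial>N) - (\<integral>x. f t x \<partial>N)) / (s - t)"
    using integrable \<open>a < t\<close> by (auto simp: eventually_at_filter q_def)
  ultimately have "((\<lambda>s. ((\<integral>x. f s x \<partial>N) - (\<integral>x. f t x \<partial>N)) / (s - t))
      \<longlongrightarrow> (\<integral>x. f' t x \<partial>N)) (at t)"
    using \<open>a < t\<close> by (auto simp: at_within_open[of t "{a<..}"] elim: Lim_transform_eventually)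
  then show ?thesis by (simp add: has_field_derivative_iff)
qed

definition ln_moment_series :: "nat \<Rightarrow> real \<Rightarrow> (nat \<Rightarrow> real) \<Rightarrow> real" where
  "ln_moment_series k t p = (\<Sum>y. ln_moment k t (p y))"

context
  fixes p :: "nat \<Rightarrow> real" and b :: real
  assumes p_nonneg: "\<And>y. 0 \<le> p y" and p_le_1: "\<And>y. p y \<le> 1"
    and summable_powr: "summable (\<lambda>y. p y powr b)"
begin

lemma summable_abs_ln_moment:
  assumes "b < t"
  shows "summable (\<lambda>y. \<bar>ln_moment k t (p y)\<bar>)"
  by (rule summable_comparison_test'
      [OF summable_mult[OF summable_powr, of "fact k / (t - b) ^ k"]])
    (use abs_ln_moment_le[OF p_nonneg p_le_1 assms] in auto)

lemma integrable_ln_moment_count_space: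
  assumes "b < t"
  shows "integrable (count_space UNIV) (\<lambda>y. ln_moment k t (p y))"
  using summable_abs_ln_moment[OF assms] by (simp add: integrable_count_space_nat_iff)

lemma abs_ln_moment_series_le:
  assumes "b < a" "a \<le> t"
  shows "\<bar>ln_moment_series k t p\<bar> \<le> fact k / (a - b) ^ k * (\<Sum>y. p y powr b)"
proof -
  have bound: "\<bar>ln_moment k t (p y)\<bar> \<le> fact k / (a - b) ^ k * p y powr b" for y
    by (rule abs_ln_moment_le[OF p_nonneg p_le_1 assms])
  have "\<bar>ln_moment_series k t p\<bar> \<le> (\<Sum>y. \<bar>ln_moment k t (p y)\<bar>)"
    unfolding ln_moment_series_def using assms by (intro summable_rabs summable_abs_ln_moment) auto
  also have "\<dots> \<le> (\<Sum>y. fact k / (a - b) ^ k * p y powr b)"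
    using assms by (intro suminf_le bound summable_abs_ln_moment summable_mult summable_powr) auto
  also have "\<dots> = fact k / (a - b) ^ k * (\<Sum>y. p y powr b)"
    by (rule suminf_mult[OF summable_powr])
  finally show ?thesis .
qed

lemma has_real_derivative_ln_moment_series:
  assumes "b < t"
  shows "((\<lambda>s. ln_moment_series k s p) has_real_derivative ln_moment_series (Suc k) t p) (at t)"
proof -
  define a where "a = (b + t) / 2"
  have "b < a" "a < t" using assms by (auto simp: a_def)
  have "((\<lambda>s. \<integral>y. ln_moment k s (p y) \<partial>count_space UNIV) has_real_derivative
      (\<integral>y. ln_moment (Suc k) t (p y) \<partial>count_space UNIV)) (at t)"
  proof (rule has_real_derivative_integral
      [where a=a and g="\<lambda>y. fact (Suc k) / (a - b) ^ Suc k * p y powr b"])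
    show "AE y in count_space UNIV.
        \<forall>s>a. ((\<lambda>s. ln_moment k s (p y)) has_real_derivative ln_moment (Suc k) s (p y)) (at s)"
      by (intro AE_I2 allI impI has_real_derivative_ln_moment p_nonneg)
    show "AE y in count_space UNIV.
        \<forall>s>a. \<bar>ln_moment (Suc k) s (p y)\<bar> \<le> fact (Suc k) / (a - b) ^ Suc k * p y powr b"
      by (intro AE_I2 allI impI abs_ln_moment_le[OF p_nonneg p_le_1 \<open>b < a\<close>]) simp
    show "integrable (count_space UNIV) (\<lambda>y. fact (Suc k) / (a - b) ^ Suc k * p y powr b)"
      using summable_powr p_nonneg by (simp add: integrable_count_space_nat_iff)
  qed (use \<open>b < a\<close> \<open>a < t\<close> integrable_ln_moment_count_space in auto)
  then have "((\<lambda>s. \<integral>y. ln_moment k s (p y) \<partial>count_space UNIV) has_real_derivative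
      ln_moment_series (Suc k) t p) (at t)"
    using integrable_ln_moment_count_space[OF assms]
    by (simp add: integral_count_space_nat ln_moment_series_def)
  then show ?thesis
    by (rule has_field_derivative_transform_within_open[where S="{b<..}"])
      (use assms integrable_ln_moment_count_space in
        \<open>auto simp: integral_count_space_nat ln_moment_series_def\<close>)
qed

lemma ln_moment_series_pos:
  assumes "p sums 1" "b < t"
  shows "0 < ln_moment_series 0 t p"
proof -
  have "p \<noteq> (\<lambda>_. 0)"
    using sums_unique2[OF assms(1)] sums_zero by force
  then obtain y where "p y \<noteq> 0" by auto
  then show ?thesis
    using summable_abs_ln_moment[OF assms(2), of 0] p_nonneg
    by (auto simp: ln_moment_series_def ln_moment_def intro!: suminf_pos2[of _ y])
qed

end

lemma tendsto_ln_div_one_minus: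
  fixes G :: "real \<Rightarrow> real"
  assumes "(G has_real_derivative D) (at 1)" and "G 1 = 1"
  shows "((\<lambda>t. 1 / (1 - t) * ln (G t)) \<longlongrightarrow> - D) (at 1)"
proof -
  have "((\<lambda>t. ln (G t)) has_real_derivative 1 / G 1 * D) (at 1)"
    using assms by (intro DERIV_chain2[OF DERIV_ln_divide]) auto
  then have "((\<lambda>t. - ((ln (G t) - ln (G 1)) / (t - 1))) \<longlongrightarrow> - D) (at 1)"
    using assms(2) by (auto simp: has_field_derivative_iff intro: tendsto_minus)
  moreover have "- ((ln (G t) - ln (G 1)) / (t - 1)) = 1 / (1 - t) * ln (G t)" for t
    using assms(2) by (cases "t = 1") (simp_all add: field_simps)
  ultimately show ?thesis by simp
qed

lemma C1_differentiable_on_ln_div_one_minus: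
  fixes G G' :: "real \<Rightarrow> real"
  assumes "1 \<notin> S"
    and deriv: "\<And>t. t \<in> S \<Longrightarrow> (G has_real_derivative G' t) (at t)"
    and "continuous_on S G'" and pos: "\<And>t. t \<in> S \<Longrightarrow> 0 < G t"
  shows "(\<lambda>t. 1 / (1 - t) * ln (G t)) C1_differentiable_on S"
proof -
  define D where "D t = 1 / (1 - t)\<^sup>2 * ln (G t) + G' t / G t * (1 / (1 - t))" for t
  have "((\<lambda>t. 1 / (1 - t) * ln (G t)) has_real_derivative D t) (at t)" if "t \<in> S" for t
  proof -
    have "((\<lambda>t. 1 / (1 - t)) has_real_derivative 1 / (1 - t)\<^sup>2) (at t)"
      using that assms(1) by (auto intro!: derivative_eq_intros simp: power2_eq_square)
    moreover have "((\<lambda>t. ln (G t)) has_real_derivative G' t / G t) (at t)"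
      using deriv[OF that] pos[OF that] by (auto intro!: derivative_eq_intros)
    ultimately show ?thesis unfolding D_def by (rule DERIV_mult)
  qed
  moreover have "continuous_on S G"
    using deriv by (blast intro: continuous_at_imp_continuous_on DERIV_isCont)
  then have "continuous_on S D"
    using assms unfolding D_def by (intro continuous_intros) fastforce+
  ultimately show ?thesis
    by (auto simp: C1_differentiable_on_def has_real_derivative_iff_has_vector_derivative)
qed

lemma term_le_sums:
  fixes q :: "nat \<Rightarrow> real"
  assumes "\<And>y. 0 \<le> q y" and "q sums s"
  shows "q y \<le> s"
  using sum_le_suminf[OF sums_summable[OF assms(2)], of "{y}"] assms by (auto simp: sums_iff)

lemma (in prob_space) integral_pos_AE:
  fixes f :: "'a \<Rightarrow> real"
  assumes "integrable M f" and "AE x in M. 0 < f x"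
  shows "0 < integral\<^sup>L M f"
proof -
  have nonneg: "AE x in M. 0 \<le> f x" using assms(2) by eventually_elim simp
  have "\<not> (AE x in M. f x = 0)"
  proof
    assume "AE x in M. f x = 0"
    with assms(2) have "AE x in M. False" by eventually_elim simp
    then show False by simp
  qed
  then show ?thesis
    using integral_nonneg_AE[OF nonneg] integral_nonneg_eq_0_iff_AE[OF assms(1) nonneg] by linarith
qed

locale powr_integrable_kernel = prob_space M
  for M :: "'a measure" and P :: "'a \<Rightarrow> nat \<Rightarrow> real" and b :: real +
  assumes P_nonneg: "\<And>x y. x \<in> space M \<Longrightarrow> 0 \<le> P x y"
    and P_sums: "\<And>x. x \<in> space M \<Longrightarrow> (\<lambda>y. P x y) sums 1"
    and P_measurable [measurable]: "\<And>y. (\<lambda>x. P x y) \<in> borel_measurable M"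
    and summable_powr: "AE x in M. summable (\<lambda>y. P x y powr b)"
    and integrable_powr: "integrable M (\<lambda>x. \<Sum>y. P x y powr b)"
begin

definition expected_ln_moment :: "nat \<Rightarrow> real \<Rightarrow> real" where
  "expected_ln_moment k t = (\<integral>x. ln_moment_series k t (P x) \<partial>M)"

lemma P_le_1: "x \<in> space M \<Longrightarrow> P x y \<le> 1"
  using term_le_sums[OF P_nonneg P_sums] .

lemma measurable_ln_moment_series [measurable]:
  "(\<lambda>x. ln_moment_series k t (P x)) \<in> borel_measurable M"
  unfolding ln_moment_series_def ln_moment_def by measurable

lemma AE_abs_ln_moment_series_le:
  assumes "b < a"
  shows "AE x in M. \<forall>t\<ge>a.
    \<bar>ln_moment_series k t (P x)\<bar> \<le> fact k / (a - b) ^ k * (\<Sum>y. P x y powr b)"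
  using summable_powr AE_space
proof eventually_elim
  case (elim x)
  then have "\<And>y. 0 \<le> P x y" "\<And>y. P x y \<le> 1" by (auto intro: P_nonneg P_le_1)
  from abs_ln_moment_series_le[OF this elim(1) assms] show ?case by blast
qed

lemma integrable_ln_moment_series:
  assumes "b < t"
  shows "integrable M (\<lambda>x. ln_moment_series k t (P x))"
proof (rule Bochner_Integration.integrable_bound[OF integrable_mult_right[OF integrable_powr]])
  show "AE x in M. norm (ln_moment_series k t (P x))
      \<le> norm (fact k / (t - b) ^ k * (\<Sum>y. P x y powr b))"
    using AE_abs_ln_moment_series_le[OF assms, of k]
  proof eventually_elim
    case (elim x)
    then have "\<bar>ln_moment_series k t (P x)\<bar> \<le> fact k / (t - b) ^ k * (\<Sum>y. P x y powr b)"
      by simp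
    then show ?case unfolding real_norm_def by (rule order_trans[OF _ abs_ge_self])
  qed
qed simp

lemma has_real_derivative_expected_ln_moment:
  assumes "b < t"
  shows "(expected_ln_moment k has_real_derivative expected_ln_moment (Suc k) t) (at t)"
proof -
  define a where "a = (b + t) / 2"
  have "b < a" "a < t" using assms by (auto simp: a_def)
  show ?thesis
    unfolding expected_ln_moment_def
  proof (rule has_real_derivative_integral
      [where a=a and g="\<lambda>x. fact (Suc k) / (a - b) ^ Suc k * (\<Sum>y. P x y powr b)"])
    show "AE x in M. \<forall>s>a.
        ((\<lambda>s. ln_moment_series k s (P x)) has_real_derivative ln_moment_series (Suc k) s (P x)) (at s)"
      using summable_powr AE_space
    proof eventually_elim
      case (elim x)
      then have "\<And>y. 0 \<le> P x y" "\<And>y. P x y \<le> 1" by (auto intro: P_nonneg P_le_1)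
      from has_real_derivative_ln_moment_series[OF this elim(1)] \<open>b < a\<close> show ?case by auto
    qed
    show "AE x in M. \<forall>s>a. \<bar>ln_moment_series (Suc k) s (P x)\<bar>
        \<le> fact (Suc k) / (a - b) ^ Suc k * (\<Sum>y. P x y powr b)"
      using AE_abs_ln_moment_series_le[OF \<open>b < a\<close>, of "Suc k"] by eventually_elim auto
  qed (use \<open>b < a\<close> \<open>a < t\<close> integrable_powr integrable_ln_moment_series in auto)
qed

lemma expected_ln_moment_pos:
  assumes "b < t"
  shows "0 < expected_ln_moment 0 t"
  unfolding expected_ln_moment_def
proof (rule integral_pos_AE[OF integrable_ln_moment_series[OF assms]])
  show "AE x in M. 0 < ln_moment_series 0 t (P x)"
    using summable_powr AE_space
  proof eventually_elim
    case (elim x)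
    then have "\<And>y. 0 \<le> P x y" "\<And>y. P x y \<le> 1" by (auto intro: P_nonneg P_le_1)
    from ln_moment_series_pos[OF this elim(1) P_sums assms] elim show ?case by simp
  qed
qed

lemma expected_ln_moment_0_1: "expected_ln_moment 0 1 = 1"
proof -
  have "expected_ln_moment 0 1 = (\<integral>x. 1 \<partial>M)"
    unfolding expected_ln_moment_def
    by (rule Bochner_Integration.integral_cong)
      (use P_sums P_nonneg in \<open>auto simp: ln_moment_series_def ln_moment_def sums_iff\<close>)
  then show ?thesis by (simp add: prob_space)
qed

lemma Renyi_cond_eq: "Renyi_cond M P = (\<lambda>t. 1 / (1 - t) * ln (expected_ln_moment 0 t))"
  by (simp add: fun_eq_iff Renyi_cond_def expected_ln_moment_def ln_moment_series_def ln_moment_def)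

lemma Shannon_cond_eq: "Shannon_cond M P = - expected_ln_moment 1 1"
proof -
  have "expected_ln_moment 1 1 = (\<integral>x. (\<Sum>y. P x y * ln (P x y)) \<partial>M)"
    unfolding expected_ln_moment_def
    by (rule Bochner_Integration.integral_cong)
      (use P_nonneg in \<open>auto simp: ln_moment_series_def ln_moment_def\<close>)
  then show ?thesis by (simp add: Shannon_cond_def)
qed

theorem Renyi_cond_C1_differentiable_on:
  assumes "b < 1"
  shows "Renyi_cond M P C1_differentiable_on ({b<..<1} \<union> {1<..})"
proof -
  have "continuous_on {b<..} (expected_ln_moment 1)"
    using has_real_derivative_expected_ln_moment[of _ 1]
    by (blast intro: continuous_at_imp_continuous_on DERIV_isCont)
  then show ?thesis
    unfolding Renyi_cond_eq using assms
    by (intro C1_differentiable_on_ln_div_one_minus[where G'="expected_ln_moment 1"]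
        has_real_derivative_expected_ln_moment[where k=0, folded One_nat_def]
        expected_ln_moment_pos) (auto elim: continuous_on_subset)
qed

theorem tendsto_Renyi_cond_Shannon_cond:
  assumes "b < 1"
  shows "(Renyi_cond M P \<longlongrightarrow> Shannon_cond M P) (at 1)"
  unfolding Renyi_cond_eq Shannon_cond_eq
  using has_real_derivative_expected_ln_moment[OF assms, of 0, folded One_nat_def]
    expected_ln_moment_0_1
  by (rule tendsto_ln_div_one_minus)

end

lemma (in prob_space) Renyi_cond_const: "Renyi_cond M (\<lambda>_. U) = Renyi_U U"
  by (simp add: fun_eq_iff Renyi_cond_def Renyi_U_def prob_space)

lemma (in prob_space) Shannon_cond_const: "Shannon_cond M (\<lambda>_. U) = Shannon_U U"
  by (simp add: Shannon_cond_def Shannon_U_def prob_space)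

theorem lemma11:
  fixes M :: "'a measure" and P :: "'a \<Rightarrow> nat \<Rightarrow> real"
    and U :: "nat \<Rightarrow> real" and \<alpha>min :: real
  assumes "prob_space M"
    and P_nonneg: "\<And>x y. x \<in> space M \<Longrightarrow> P x y \<ge> 0"
    and P_sums: "\<And>x. x \<in> space M \<Longrightarrow> (\<lambda>y. P x y) sums 1"
    and P_meas: "\<And>y. (\<lambda>x. P x y) \<in> borel_measurable M"
    and U_nonneg: "\<And>y. U y \<ge> 0"
    and U_sums: "U sums 1"
    and amin: "0 < \<alpha>min" "\<alpha>min < 1"
    and U_tr: "summable (\<lambda>y. U y powr \<alpha>min)"
    and P_tr: "AE x in M. summable (\<lambda>y. P x y powr \<alpha>min)"
    and P_int: "integrable M (\<lambda>x. \<Sum>y. P x y powr \<alpha>min)"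
  shows "Renyi_U U C1_differentiable_on ({\<alpha>min<..<1} \<union> {1<..})
    \<and> Renyi_cond M P C1_differentiable_on ({\<alpha>min<..<1} \<union> {1<..})
    \<and> (Renyi_U U \<longlongrightarrow> Shannon_U U) (at 1)
    \<and> (Renyi_cond M P \<longlongrightarrow> Shannon_cond M P) (at 1)"
proof -
  interpret prob_space M by fact
  interpret cond: powr_integrable_kernel M P \<alpha>min
    by unfold_locales (use assms in auto)
  interpret uncond: powr_integrable_kernel M "\<lambda>_. U" \<alpha>min
    by unfold_locales (use assms in auto)
  show ?thesis
    using cond.Renyi_cond_C1_differentiable_on cond.tendsto_Renyi_cond_Shannon_cond
      uncond.Renyi_cond_C1_differentiable_on uncond.tendsto_Renyi_cond_Shannon_cond \<open>\<alpha>min < 1\<close>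
    by (simp add: Renyi_cond_const Shannon_cond_const)
qed

end
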